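(* Let $L=\langle S,A,\to\rangle$ be a labelled transition system and $s,t\in S$. Then $s\equiv_b t$ if and only if $s\equiv_\emptyset t$.
   Context: An LTS is $\langle S,A,\to\rangle$ with states $S$, actions $A$ containing the internal action $\tau$, and $\to\subseteq S\times A\times S$; write $s\xrightarrow{a}t$. In both games below, Duplicator wins a finite play if Spoiler gets stuck, and an infinite play if it contains infinitely many configurations with reward $\checkmark$; all other plays are won by Spoiler. Branching bisimulation game: Spoiler-owned configurations $\langle (s,t),c,r\rangle_S$ and Duplicator-owned $\langle (s,t),c,r\rangle_D$ with $(s,t)\in S\times S$, $c\in (A\times S)\cup\{\dagger\}$, $r\in\{*,\checkmark\}$. From $\langle (s,t),c,r\rangle_S$ Spoiler may: (1) select $s\xrightarrow{a}s'$ and move to $\langle (s,t),(a,s'),*\rangle_D$ if $c=(a,s')$ or $c=\dagger$, and to $\langle (s,t),(a,s'),\checkmark\rangle_D$ otherwise; (2) select $t\xrightarrow{a}t'$ and move to $\langle (t,s),(a,t'),\checkmark\rangle_D$. From $\langle (u,v),(a,u'),r\rangle_D$ Duplicator may: (1) if $a=\tau$, move to $\langle (u',v),\dagger,\checkmark\rangle_S$; (2) for some $v\xrightarrow{a}v'$, move to $\langle (u',v'),\dagger,\checkmark\rangle_S$; (3) for some $v\xrightarrow{\tau}v'$, move to $\langle (u,v'),(a,u'),*\rangle_S$. $s\equiv_b t$ iff Duplicator has a strategy winning all plays from $\langle (s,t),\dagger,*\rangle_S$. $\emptyset$-generic bisimulation game: with formal tags $\frown,\smile$, Spoiler-owned configurations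 $\langle (s,t),c,m,r\rangle_S$ and Duplicator-owned $\langle (s,t),c,m,r\rangle_D$ with $(s,t)\in S\times S$, $c\in (A\times S)\cup\{\dagger\}$, $m\in (S\times\{\frown,\smile\})\cup\{\dagger\}$, $r\in\{*,\checkmark\}$. Spoiler from $\langle (s,t),c,m,r\rangle_S$ may: (S1) move to $\langle (s,t),c,m,*\rangle_D$ if $c\neq\dagger$; (S2a) for some $s\xrightarrow{a}s'$, move to $\langle (s,t),(a,s'),(t,\frown),*\rangle_D$ if $c=\dagger$; (S2b) for some $s\xrightarrow{a}s'$, move to $\langle (s,t),(a,s'),(t,\frown),\checkmark\rangle_D$ if $c\neq (a,s')$; (S3) for some $t\xrightarrow{a}t'$, move to $\langle (t,s),(a,t'),(s,\frown),\checkmark\rangle_D$. Duplicator from $\langle (u,v),(a,u'),(\bar v,f),r\rangle_D$ may: (D1) move to $\langle (u',\bar v),\dagger,\dagger,\checkmark\rangle_S$ if $a=\tau$; (D2) if $f=\frown$ and $\bar v\xrightarrow{a}v'$: (a) move to $\langle (u',v'),(a,u'),(v',\smile),*\rangle_S$ or (b) move to $\langle (u',v'),\dagger,\dagger,\checkmark\rangle_S$; (D3) for some $\bar v\xrightarrow{\tau}v'$: (a) move to $\langle (u,v'),(a,u'),(v',f),*\rangle_S$, or (b) only if $f=\smile$, move to $\langle (u',v'),\dagger,\dagger,\checkmark\rangle_S$. $s\equiv_\emptyset t$ iff Duplicator has a strategy winning all plays from $\langle (s,t),\dagger,\dagger,*\rangle_S$. *)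

theory Defs
  imports Main
begin

text \<open>A game is given by a move relation mv, a predicate D marking the
Duplicator-owned configurations (all others are Spoiler-owned), and a predicate
G marking configurations with reward checkmark.  Duplicator strategies may depend
on the whole history (a nonempty list of configurations, last element current).\<close>

definition dup_strategy :: "('c \<Rightarrow> 'c \<Rightarrow> bool) \<Rightarrow> ('c \<Rightarrow> bool) \<Rightarrow> ('c list \<Rightarrow> 'c) \<Rightarrow> bool" where
  "dup_strategy mv D \<sigma> \<longleftrightarrow>
     (\<forall>h. h \<noteq> [] \<longrightarrow> D (last h) \<longrightarrow> (\<exists>c'. mv (last h) c') \<longrightarrow> mv (last h) (\<sigma> h))"

definition fin_play :: "('c \<Rightarrow> 'c \<Rightarrow> bool) \<Rightarrow> ('c \<Rightarrow> bool) \<Rightarrow> ('c list \<Rightarrow> 'c) \<Rightarrow> 'c \<Rightarrow> 'c list \<Rightarrow> bool" where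
  "fin_play mv D \<sigma> c0 p \<longleftrightarrow>
     p \<noteq> [] \<and> hd p = c0 \<and>
     (\<forall>i. Suc i < length p \<longrightarrow> mv (p ! i) (p ! Suc i) \<and>
                                 (D (p ! i) \<longrightarrow> p ! Suc i = \<sigma> (take (Suc i) p))) \<and>
     \<not> (\<exists>c'. mv (last p) c')"

definition inf_play :: "('c \<Rightarrow> 'c \<Rightarrow> bool) \<Rightarrow> ('c \<Rightarrow> bool) \<Rightarrow> ('c list \<Rightarrow> 'c) \<Rightarrow> 'c \<Rightarrow> (nat \<Rightarrow> 'c) \<Rightarrow> bool" where
  "inf_play mv D \<sigma> c0 f \<longleftrightarrow>
     f 0 = c0 \<and>
     (\<forall>i. mv (f i) (f (Suc i)) \<and> (D (f i) \<longrightarrow> f (Suc i) = \<sigma> (map f [0..<Suc i])))"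

definition dup_wins :: "('c \<Rightarrow> 'c \<Rightarrow> bool) \<Rightarrow> ('c \<Rightarrow> bool) \<Rightarrow> ('c \<Rightarrow> bool) \<Rightarrow> 'c \<Rightarrow> bool" where
  "dup_wins mv D G c0 \<longleftrightarrow>
     (\<exists>\<sigma>. dup_strategy mv D \<sigma> \<and>
          (\<forall>p. fin_play mv D \<sigma> c0 p \<longrightarrow> \<not> D (last p)) \<and>
          (\<forall>f. inf_play mv D \<sigma> c0 f \<longrightarrow> infinite {i. G (f i)}))"

text \<open>An LTS over state type 's and action type 'a is a transition predicate
step s a s'; tau is the internal action.  Rewards: True = checkmark, False = *.\<close>

text \<open>Component c: None = dagger, Some (a,s') = (a,s').\<close>
datatype ('s, 'a) bconf =
    BS "'s \<times> 's" "('a \<times> 's) option" bool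
  | BD "'s \<times> 's" "('a \<times> 's) option" bool

fun bmove :: "('s \<Rightarrow> 'a \<Rightarrow> 's \<Rightarrow> bool) \<Rightarrow> 'a \<Rightarrow> ('s,'a) bconf \<Rightarrow> ('s,'a) bconf \<Rightarrow> bool" where
  "bmove step tau (BS (s,t) c r) g =
     ((\<exists>a s'. step s a s' \<and>
         g = BD (s,t) (Some (a,s')) (\<not> (c = Some (a,s') \<or> c = None))) \<or>
      (\<exists>a t'. step t a t' \<and> g = BD (t,s) (Some (a,t')) True))"
| "bmove step tau (BD (u,v) None r) g = False"
| "bmove step tau (BD (u,v) (Some (a,u')) r) g =
     ((a = tau \<and> g = BS (u',v) None True) \<or>
      (\<exists>v'. step v a v' \<and> g = BS (u',v') None True) \<or>
      (\<exists>v'. step v tau v' \<and> g = BS (u,v') (Some (a,u')) False))"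

fun bdup :: "('s,'a) bconf \<Rightarrow> bool" where
  "bdup (BS _ _ _) = False"
| "bdup (BD _ _ _) = True"

fun breward :: "('s,'a) bconf \<Rightarrow> bool" where
  "breward (BS _ _ r) = r"
| "breward (BD _ _ r) = r"

definition branching_bisim :: "('s \<Rightarrow> 'a \<Rightarrow> 's \<Rightarrow> bool) \<Rightarrow> 'a \<Rightarrow> 's \<Rightarrow> 's \<Rightarrow> bool" where
  "branching_bisim step tau s t \<longleftrightarrow>
     dup_wins (bmove step tau) bdup breward (BS (s,t) None False)"

datatype tag = Frown | Smile

text \<open>Component m: None = dagger, Some (v, f).\<close>
datatype ('s, 'a) gconf =
    GS "'s \<times> 's" "('a \<times> 's) option" "('s \<times> tag) option" bool
  | GD "'s \<times> 's" "('a \<times> 's) option" "('s \<times> tag) option" bool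

fun gmove :: "('s \<Rightarrow> 'a \<Rightarrow> 's \<Rightarrow> bool) \<Rightarrow> 'a \<Rightarrow> ('s,'a) gconf \<Rightarrow> ('s,'a) gconf \<Rightarrow> bool" where
  "gmove step tau (GS (s,t) c m r) g =
     ((c \<noteq> None \<and> g = GD (s,t) c m False) \<or>
      (\<exists>a s'. c = None \<and> step s a s' \<and> g = GD (s,t) (Some (a,s')) (Some (t,Frown)) False) \<or>
      (\<exists>a s'. c \<noteq> Some (a,s') \<and> step s a s' \<and> g = GD (s,t) (Some (a,s')) (Some (t,Frown)) True) \<or>
      (\<exists>a t'. step t a t' \<and> g = GD (t,s) (Some (a,t')) (Some (s,Frown)) True))"
| "gmove step tau (GD (u,v) (Some (a,u')) (Some (vb,f)) r) g =
     ((a = tau \<and> g = GS (u',vb) None None True) \<or>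
      (\<exists>v'. f = Frown \<and> step vb a v' \<and>
         (g = GS (u',v') (Some (a,u')) (Some (v',Smile)) False \<or> g = GS (u',v') None None True)) \<or>
      (\<exists>v'. step vb tau v' \<and>
         (g = GS (u,v') (Some (a,u')) (Some (v',f)) False \<or>
          (f = Smile \<and> g = GS (u',v') None None True))))"
| "gmove step tau (GD _ _ _ _) g = False"

fun gdup :: "('s,'a) gconf \<Rightarrow> bool" where
  "gdup (GS _ _ _ _) = False"
| "gdup (GD _ _ _ _) = True"

fun greward :: "('s,'a) gconf \<Rightarrow> bool" where
  "greward (GS _ _ _ r) = r"
| "greward (GD _ _ _ r) = r"

definition empty_generic_bisim :: "('s \<Rightarrow> 'a \<Rightarrow> 's \<Rightarrow> bool) \<Rightarrow> 'a \<Rightarrow> 's \<Rightarrow> 's \<Rightarrow> bool" where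
  "empty_generic_bisim step tau s t \<longleftrightarrow>
     dup_wins (gmove step tau) gdup greward (GS (s,t) None None False)"

end

theory Submission
  imports Defs
begin

text \<open>Both games characterise the existence of a branching bisimulation relating \<open>s\<close> and \<open>t\<close>.
Given such a relation, Duplicator answers a challenge immediately when she can, and otherwise by
a silent step that decreases the number of silent steps still needed; every reward-free round is
such a step, so reward-free stretches of a play are finite. Conversely, the pairs occurring in
Spoiler configurations reachable under a winning strategy form, after symmetrisation, a branching
bisimulation: if some challenge could not be answered inside this relation, Spoiler could confront
Duplicator with it in reward-free rounds forever. In the generic game a smile marker only ever
accompanies a challenge \<open>x -b\<rightarrow> x\<close>, and Duplicator's escape D3b is met by Spoiler re-issuing
that challenge under a frown marker.\<close>

section \<open>Strategies in reward games\<close>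

definition consistent_history ::
  "('c \<Rightarrow> 'c \<Rightarrow> bool) \<Rightarrow> ('c \<Rightarrow> bool) \<Rightarrow> ('c list \<Rightarrow> 'c) \<Rightarrow> 'c \<Rightarrow> 'c list \<Rightarrow> bool" where
  "consistent_history mv D \<sigma> c0 h \<longleftrightarrow> h \<noteq> [] \<and> hd h = c0 \<and>
     (\<forall>i. Suc i < length h \<longrightarrow> mv (h ! i) (h ! Suc i) \<and>
                                 (D (h ! i) \<longrightarrow> h ! Suc i = \<sigma> (take (Suc i) h)))"

definition winning_strategy ::
  "('c \<Rightarrow> 'c \<Rightarrow> bool) \<Rightarrow> ('c \<Rightarrow> bool) \<Rightarrow> ('c \<Rightarrow> bool) \<Rightarrow> ('c list \<Rightarrow> 'c) \<Rightarrow> 'c \<Rightarrow> bool" where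
  "winning_strategy mv D G \<sigma> c0 \<longleftrightarrow> dup_strategy mv D \<sigma> \<and>
     (\<forall>p. fin_play mv D \<sigma> c0 p \<longrightarrow> \<not> D (last p)) \<and>
     (\<forall>f. inf_play mv D \<sigma> c0 f \<longrightarrow> infinite {i. G (f i)})"

lemma dup_wins_iff_winning_strategy:
  "dup_wins mv D G c0 \<longleftrightarrow> (\<exists>\<sigma>. winning_strategy mv D G \<sigma> c0)"
  unfolding dup_wins_def winning_strategy_def by blast

lemma fin_play_iff_consistent_history:
  "fin_play mv D \<sigma> c0 p \<longleftrightarrow> consistent_history mv D \<sigma> c0 p \<and> \<not> (\<exists>c'. mv (last p) c')"
  unfolding fin_play_def consistent_history_def by blast

lemma consistent_history_init: "consistent_history mv D \<sigma> c0 [c0]"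
  unfolding consistent_history_def by simp

lemma consistent_history_snoc:
  assumes h: "consistent_history mv D \<sigma> c0 h"
    and "mv (last h) c" and "D (last h) \<Longrightarrow> c = \<sigma> h"
  shows "consistent_history mv D \<sigma> c0 (h @ [c])"
proof -
  have ne: "h \<noteq> []" and hd: "hd h = c0" using h unfolding consistent_history_def by auto
  have "mv ((h @ [c]) ! i) ((h @ [c]) ! Suc i) \<and>
        (D ((h @ [c]) ! i) \<longrightarrow> (h @ [c]) ! Suc i = \<sigma> (take (Suc i) (h @ [c])))"
    if i: "Suc i < length (h @ [c])" for i
  proof (cases "Suc i < length h")
    case True
    then show ?thesis using h unfolding consistent_history_def by (auto simp: nth_append)
  next
    case False
    then have last: "Suc i = length h" using i by simp
    then have "h ! i = last h" using ne by (simp add: last_conv_nth last[symmetric])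
    then show ?thesis using last assms(2,3) by (auto simp: nth_append)
  qed
  then show ?thesis using ne hd unfolding consistent_history_def by simp
qed

lemma consistent_history_take:
  "consistent_history mv D \<sigma> c0 h \<Longrightarrow> 0 < n \<Longrightarrow> consistent_history mv D \<sigma> c0 (take n h)"
  unfolding consistent_history_def by (auto simp: hd_take take_take min_def)

lemma consistent_history_invariant:
  assumes h: "consistent_history mv D \<sigma> c0 h" and "P c0"
    and step: "\<And>i. Suc i < length h \<Longrightarrow> P (h ! i) \<Longrightarrow> P (h ! Suc i)"
    and "i < length h"
  shows "P (h ! i)"
  using \<open>i < length h\<close>
proof (induction i)
  case 0
  then show ?case using h \<open>P c0\<close> unfolding consistent_history_def by (metis hd_conv_nth)
next
  case (Suc i)
  then show ?case using step by simp
qed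

lemma consistent_history_last_invariant:
  assumes "consistent_history mv D \<sigma> c0 h" and "P c0"
    and "\<And>c c'. P c \<Longrightarrow> mv c c' \<Longrightarrow> P c'"
  shows "P (last h)"
proof -
  have "h \<noteq> []" using assms(1) unfolding consistent_history_def by simp
  moreover have "P (h ! (length h - 1))"
  proof (rule consistent_history_invariant[where P = P, OF assms(1,2)])
    fix i assume "Suc i < length h" "P (h ! i)"
    then show "P (h ! Suc i)" using assms(1,3) unfolding consistent_history_def by blast
  qed (use \<open>h \<noteq> []\<close> in simp)
  ultimately show ?thesis by (simp add: last_conv_nth)
qed

lemma inf_play_iff_consistent_prefixes:
  "inf_play mv D \<sigma> c0 f \<longleftrightarrow> (\<forall>n. consistent_history mv D \<sigma> c0 (map f [0..<Suc n]))"
proof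
  assume "inf_play mv D \<sigma> c0 f"
  then show "\<forall>n. consistent_history mv D \<sigma> c0 (map f [0..<Suc n])"
    unfolding inf_play_def consistent_history_def
    by (auto simp: take_map hd_map simp del: upt_Suc)
next
  assume prefixes: "\<forall>n. consistent_history mv D \<sigma> c0 (map f [0..<Suc n])"
  show "inf_play mv D \<sigma> c0 f"
    unfolding inf_play_def
  proof (intro conjI allI impI)
    show "f 0 = c0" using spec[OF prefixes, of 0] unfolding consistent_history_def by simp
    fix i
    have c: "consistent_history mv D \<sigma> c0 (map f [0..<Suc (Suc i)])" using prefixes by blast
    have "take (Suc i) (map f [0..<Suc (Suc i)]) = map f [0..<Suc i]"
      by (simp add: take_map)
    moreover have "mv (map f [0..<Suc (Suc i)] ! i) (map f [0..<Suc (Suc i)] ! Suc i) \<and>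
      (D (map f [0..<Suc (Suc i)] ! i) \<longrightarrow>
       map f [0..<Suc (Suc i)] ! Suc i = \<sigma> (take (Suc i) (map f [0..<Suc (Suc i)])))"
      using c unfolding consistent_history_def by (simp del: upt_Suc)
    ultimately show "mv (f i) (f (Suc i))" "D (f i) \<Longrightarrow> f (Suc i) = \<sigma> (map f [0..<Suc i])"
      by (simp_all del: upt_Suc)
  qed
qed

lemma winning_strategy_move:
  assumes win: "winning_strategy mv D G \<sigma> c0"
    and h: "consistent_history mv D \<sigma> c0 h" and "D (last h)"
  shows "mv (last h) (\<sigma> h) \<and> consistent_history mv D \<sigma> c0 (h @ [\<sigma> h])"
proof -
  have "\<not> fin_play mv D \<sigma> c0 h" using win \<open>D (last h)\<close> unfolding winning_strategy_def by blast
  then have "\<exists>c'. mv (last h) c'" using h by (simp add: fin_play_iff_consistent_history)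
  moreover have "h \<noteq> []" using h unfolding consistent_history_def by simp
  ultimately have "mv (last h) (\<sigma> h)"
    using win \<open>D (last h)\<close> unfolding winning_strategy_def dup_strategy_def by blast
  then show ?thesis using consistent_history_snoc[OF h] by blast
qed

definition alternating :: "('c \<Rightarrow> 'c \<Rightarrow> bool) \<Rightarrow> ('c \<Rightarrow> bool) \<Rightarrow> bool" where
  "alternating mv D \<longleftrightarrow> (\<forall>c c'. mv c c' \<longrightarrow> D c' \<longleftrightarrow> \<not> D c)"

lemma infinite_rewards_by_rank:
  fixes rank :: "'c \<Rightarrow> nat"
  assumes move: "\<And>i. mv (f i) (f (Suc i))" and answered: "\<And>i. D (f i) \<Longrightarrow> f (Suc i) = answer (f i)"
    and inv: "\<And>i. INV (f i)"
    and alt: "alternating mv D"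
    and rank: "\<And>c c'. INV c \<Longrightarrow> D c \<Longrightarrow> \<not> G (answer c) \<Longrightarrow> mv (answer c) c' \<Longrightarrow> \<not> G c' \<Longrightarrow>
      rank c' < rank c"
  shows "infinite {i. G (f i)}"
proof
  assume "finite {i. G (f i)}"
  then obtain N where unrewarded: "\<And>i. N \<le> i \<Longrightarrow> \<not> G (f i)"
    by (metis finite_nat_set_iff_bounded_le mem_Collect_eq not_less_eq_eq)
  obtain i0 where "N \<le> i0" "D (f i0)"
    using alt move le_SucI unfolding alternating_def by blast
  have round: "D (f (j + 2)) \<and> rank (f (j + 2)) < rank (f j)" if "N \<le> j" "D (f j)" for j
    using rank[OF inv \<open>D (f j)\<close>, of "f (j + 2)"] answered[OF \<open>D (f j)\<close>] move[of j] move[of "Suc j"]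
      unrewarded[of "Suc j"] unrewarded[of "j + 2"] that alt
    unfolding alternating_def by simp
  have "D (f (i0 + 2 * k))" for k
    by (induction k) (use \<open>D (f i0)\<close> \<open>N \<le> i0\<close> round in \<open>auto simp: add.commute\<close>)
  then have "(f (i0 + 2 * Suc k), f (i0 + 2 * k)) \<in> measure rank" for k
    using round[of "i0 + 2 * k"] \<open>N \<le> i0\<close> by (simp add: add.assoc)
  then show False
    using wf_no_infinite_down_chainE[OF wf_measure, of "\<lambda>k. f (i0 + 2 * k)" rank] by blast
qed

lemma dup_wins_by_invariant_and_rank:
  fixes rank :: "'c \<Rightarrow> nat" and answer :: "'c \<Rightarrow> 'c"
  assumes "INV c0"
    and alt: "alternating mv D"
    and spoiler_inv: "\<And>c c'. INV c \<Longrightarrow> \<not> D c \<Longrightarrow> mv c c' \<Longrightarrow> INV c'"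
    and answer: "\<And>c. INV c \<Longrightarrow> D c \<Longrightarrow> mv c (answer c) \<and> INV (answer c)"
    and rank: "\<And>c c'. INV c \<Longrightarrow> D c \<Longrightarrow> \<not> G (answer c) \<Longrightarrow> mv (answer c) c' \<Longrightarrow> \<not> G c' \<Longrightarrow>
      rank c' < rank c"
  shows "dup_wins mv D G c0"
proof -
  \<comment> \<open>Outside the invariant \<open>answer\<close> need not be legal; the fallback keeps \<open>\<sigma>\<close> a strategy.\<close>
  define \<sigma> where
    "\<sigma> h = (if mv (last h) (answer (last h)) then answer (last h) else SOME c. mv (last h) c)" for h
  have \<sigma>_answer: "\<sigma> h = answer (last h)" if "INV (last h)" "D (last h)" for h
    using answer[OF that] unfolding \<sigma>_def by simp
  have inv: "INV (h ! i)" if h: "consistent_history mv D \<sigma> c0 h" and "i < length h" for h i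
  proof (rule consistent_history_invariant[where P = INV, OF h \<open>INV c0\<close> _ \<open>i < length h\<close>])
    fix j assume j: "Suc j < length h" and "INV (h ! j)"
    then have "mv (h ! j) (h ! Suc j)" and "D (h ! j) \<Longrightarrow> h ! Suc j = \<sigma> (take (Suc j) h)"
      using h unfolding consistent_history_def by auto
    moreover have "last (take (Suc j) h) = h ! j" using j by (simp add: take_Suc_conv_app_nth)
    ultimately show "INV (h ! Suc j)"
      using \<open>INV (h ! j)\<close> \<sigma>_answer answer spoiler_inv by (cases "D (h ! j)") auto
  qed
  have "winning_strategy mv D G \<sigma> c0"
    unfolding winning_strategy_def
  proof (intro conjI allI impI)
    show "dup_strategy mv D \<sigma>" unfolding dup_strategy_def \<sigma>_def by (auto intro: someI_ex)
  next
    fix p assume "fin_play mv D \<sigma> c0 p"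
    then have p: "consistent_history mv D \<sigma> c0 p" and stuck: "\<not> (\<exists>c'. mv (last p) c')"
      by (auto simp: fin_play_iff_consistent_history)
    have "p \<noteq> []" using p unfolding consistent_history_def by simp
    then have "INV (last p)" using inv[OF p, of "length p - 1"] by (simp add: last_conv_nth)
    then show "\<not> D (last p)" using answer stuck by blast
  next
    fix f assume play: "inf_play mv D \<sigma> c0 f"
    have inv_f: "INV (f i)" for i
      using inv[of "map f [0..<Suc i]" i] play
      by (simp add: inf_play_iff_consistent_prefixes del: upt_Suc)
    have move_f: "mv (f i) (f (Suc i))" and answer_f: "D (f i) \<Longrightarrow> f (Suc i) = answer (f i)" for i
      using play \<sigma>_answer[of "map f [0..<Suc i]"] inv_f[of i] unfolding inf_play_def by auto
    show "infinite {i. G (f i)}"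
      using infinite_rewards_by_rank[of mv f D answer INV G rank] move_f answer_f inv_f alt rank
      by blast
  qed
  then show ?thesis unfolding dup_wins_iff_winning_strategy by blast
qed

lemma inf_play_of_history_chain:
  assumes H: "\<And>n. consistent_history mv D \<sigma> c0 (H n)"
    and grow: "\<And>n. \<exists>e. e \<noteq> [] \<and> H (Suc n) = H n @ e"
  obtains f where "inf_play mv D \<sigma> c0 f" and "\<And>n i. i < length (H n) \<Longrightarrow> f i = H n ! i"
proof -
  have len: "n < length (H n)" for n
  proof (induction n)
    case 0
    then show ?case using H[of 0] unfolding consistent_history_def by simp
  next
    case (Suc n)
    then show ?case using grow[of n] by (auto simp flip: length_greater_0_conv)
  qed
  have prefix: "\<exists>e. H n = H m @ e" if "m \<le> n" for m n
    using that
  proof (induction n rule: dec_induct)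
    case (step n)
    then show ?case using grow[of n] by fastforce
  qed simp
  have agree: "H m ! i = H n ! i" if "i < length (H m)" "i < length (H n)" for m n i
    using prefix[of m n] prefix[of n m] that by (cases "m \<le> n") (auto simp: nth_append)
  define f where "f i = H i ! i" for i
  have f_H: "f i = H n ! i" if "i < length (H n)" for n i
    unfolding f_def using agree[OF len that] .
  have "map f [0..<Suc n] = take (Suc n) (H n)" for n
    by (rule nth_equalityI) (use len[of n] f_H in \<open>auto simp del: upt_Suc\<close>)
  then have "inf_play mv D \<sigma> c0 f"
    unfolding inf_play_iff_consistent_prefixes
    by (simp add: consistent_history_take[OF H] del: upt_Suc)
  then show ?thesis using that f_H by blast
qed

lemma inf_play_of_unrewarded_extensions:
  assumes "P h0" and P_consistent: "\<And>h. P h \<Longrightarrow> consistent_history mv D \<sigma> c0 h"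
    and extend: "\<And>h. P h \<Longrightarrow> \<exists>e. e \<noteq> [] \<and> P (h @ e) \<and> (\<forall>c\<in>set e. \<not> G c)"
  obtains f where "inf_play mv D \<sigma> c0 f" and "finite {i. G (f i)}"
proof -
  define ext where "ext h = (SOME e. e \<noteq> [] \<and> P (h @ e) \<and> (\<forall>c\<in>set e. \<not> G c))" for h
  define H where "H n = rec_nat h0 (\<lambda>_ h. h @ ext h) n" for n
  have H_0: "H 0 = h0" and H_Suc: "H (Suc n) = H n @ ext (H n)" for n
    by (simp_all add: H_def)
  have ext: "ext h \<noteq> [] \<and> P (h @ ext h) \<and> (\<forall>c\<in>set (ext h). \<not> G c)" if "P h" for h
    unfolding ext_def using someI_ex[OF extend[OF that]] .
  have P: "P (H n)" for n
    by (induction n) (simp_all add: H_0 H_Suc \<open>P h0\<close> ext)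
  obtain f where play: "inf_play mv D \<sigma> c0 f" and f_H: "\<And>n i. i < length (H n) \<Longrightarrow> f i = H n ! i"
  proof (rule inf_play_of_history_chain)
    show "consistent_history mv D \<sigma> c0 (H n)" for n using P P_consistent by blast
    show "\<exists>e. e \<noteq> [] \<and> H (Suc n) = H n @ e" for n unfolding H_Suc using ext[OF P] by blast
  qed blast
  have unrewarded: "\<not> G (H n ! i)" if "length h0 \<le> i" "i < length (H n)" for n i
    using that
  proof (induction n)
    case (Suc n)
    then show ?case
      using ext[OF P, of n] by (cases "i < length (H n)") (auto simp: H_Suc nth_append)
  qed (simp add: H_0)
  have len: "i < length (H i)" for i
  proof (induction i)
    case 0
    then show ?case
      using P_consistent[OF \<open>P h0\<close>] unfolding consistent_history_def by (simp add: H_0)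
  next
    case (Suc i)
    then show ?case using ext[OF P, of i] by (simp add: H_Suc flip: length_greater_0_conv)
  qed
  have "{i. G (f i)} \<subseteq> {..<length h0}"
  proof (rule subsetI, rule ccontr)
    fix i assume "i \<in> {i. G (f i)}" "i \<notin> {..<length h0}"
    then show False using unrewarded[of i i] len[of i] f_H[of i i] by simp
  qed
  then show ?thesis using play that finite_subset by blast
qed

lemma winning_strategy_not_trapped:
  assumes win: "winning_strategy mv D G \<sigma> c0"
    and h0: "consistent_history mv D \<sigma> c0 h0" "Trap (last h0)"
    and alt: "alternating mv D" and trap_dup: "\<And>c. Trap c \<Longrightarrow> D c"
    and trapped: "\<And>h. consistent_history mv D \<sigma> c0 h \<Longrightarrow> Trap (last h) \<Longrightarrow>
        \<exists>c'. \<not> G (\<sigma> h) \<and> mv (\<sigma> h) c' \<and> \<not> G c' \<and> Trap c'"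
  shows False
proof -
  let ?P = "\<lambda>h. consistent_history mv D \<sigma> c0 h \<and> Trap (last h)"
  have "\<exists>e. e \<noteq> [] \<and> ?P (h @ e) \<and> (\<forall>c\<in>set e. \<not> G c)" if h: "?P h" for h
  proof -
    obtain c' where c': "\<not> G (\<sigma> h)" "mv (\<sigma> h) c'" "\<not> G c'" "Trap c'" using trapped h by blast
    have "D (last h)" using h trap_dup by blast
    then have answered: "consistent_history mv D \<sigma> c0 (h @ [\<sigma> h])" and "\<not> D (\<sigma> h)"
      using winning_strategy_move[OF win] h alt unfolding alternating_def by blast+
    then have "consistent_history mv D \<sigma> c0 ((h @ [\<sigma> h]) @ [c'])"
      using consistent_history_snoc[OF answered, of c'] c' by simp
    then show ?thesis using c' by (intro exI[of _ "[\<sigma> h, c']"]) simp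
  qed
  then obtain f where "inf_play mv D \<sigma> c0 f" "finite {i. G (f i)}"
    using inf_play_of_unrewarded_extensions[of ?P h0] h0 by blast
  then show False using win unfolding winning_strategy_def by blast
qed

section \<open>Branching bisimulations\<close>

type_synonym ('s, 'a) lts = "'s \<Rightarrow> 'a \<Rightarrow> 's \<Rightarrow> bool"

inductive branching_answer ::
  "('s, 'a) lts \<Rightarrow> 'a \<Rightarrow> ('s \<times> 's) set \<Rightarrow> 's \<Rightarrow> 'a \<Rightarrow> 's \<Rightarrow> 's \<Rightarrow> nat \<Rightarrow> bool"
  for step tau R x b x' where
  answer_silent: "b = tau \<Longrightarrow> (x', y) \<in> R \<Longrightarrow> branching_answer step tau R x b x' y 0"
| answer_step: "step y b y' \<Longrightarrow> (x', y') \<in> R \<Longrightarrow> branching_answer step tau R x b x' y 0"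
| answer_delay: "step y tau y1 \<Longrightarrow> (x, y1) \<in> R \<Longrightarrow> branching_answer step tau R x b x' y1 n \<Longrightarrow>
    branching_answer step tau R x b x' y (Suc n)"

definition branching_bisimulation :: "('s, 'a) lts \<Rightarrow> 'a \<Rightarrow> ('s \<times> 's) set \<Rightarrow> bool" where
  "branching_bisimulation step tau R \<longleftrightarrow> sym R \<and>
     (\<forall>x y b x'. (x, y) \<in> R \<longrightarrow> step x b x' \<longrightarrow> (\<exists>n. branching_answer step tau R x b x' y n))"

lemma branching_bisimulationD:
  assumes "branching_bisimulation step tau R" and "(x, y) \<in> R"
  shows "(y, x) \<in> R" and "step x b x' \<Longrightarrow> \<exists>n. branching_answer step tau R x b x' y n"
  using assms unfolding branching_bisimulation_def sym_def by blast+

lemma branching_answer_mono: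
  "branching_answer step tau R x b x' y n \<Longrightarrow> R \<subseteq> R' \<Longrightarrow> branching_answer step tau R' x b x' y n"
  by (induction rule: branching_answer.induct) (auto intro: branching_answer.intros)

lemma branching_bisimulation_symcl:
  assumes "\<And>x y b x'. (x, y) \<in> Q \<or> (y, x) \<in> Q \<Longrightarrow> step x b x' \<Longrightarrow>
    \<exists>n. branching_answer step tau Q x b x' y n"
  shows "branching_bisimulation step tau (Q \<union> Q\<inverse>)"
  unfolding branching_bisimulation_def sym_def
  using assms branching_answer_mono[of step tau Q _ _ _ _ _ "Q \<union> Q\<inverse>"] by blast

definition immediate_answer :: "('s, 'a) lts \<Rightarrow> 'a \<Rightarrow> ('s \<times> 's) set \<Rightarrow> 'a \<Rightarrow> 's \<Rightarrow> 's \<Rightarrow> 's option"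
  where
  "immediate_answer step tau R b x' y =
     (if b = tau \<and> (x', y) \<in> R then Some y
      else if \<exists>y'. step y b y' \<and> (x', y') \<in> R then Some (SOME y'. step y b y' \<and> (x', y') \<in> R)
      else None)"

lemma immediate_answer_Some:
  assumes "immediate_answer step tau R b x' y = Some y'"
  shows "(x', y') \<in> R \<and> (b = tau \<and> y' = y \<or> step y b y')"
proof (cases "b = tau \<and> (x', y) \<in> R")
  case False
  with assms have "\<exists>y'. step y b y' \<and> (x', y') \<in> R" and "y' = (SOME y'. step y b y' \<and> (x', y') \<in> R)"
    unfolding immediate_answer_def by (auto split: if_splits)
  then show ?thesis by (metis (mono_tags, lifting) someI_ex)
qed (use assms in \<open>simp add: immediate_answer_def\<close>)

definition answer_depth ::
  "('s, 'a) lts \<Rightarrow> 'a \<Rightarrow> ('s \<times> 's) set \<Rightarrow> 's \<Rightarrow> 'a \<Rightarrow> 's \<Rightarrow> 's \<Rightarrow> nat" where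
  "answer_depth step tau R x b x' y = (LEAST n. branching_answer step tau R x b x' y n)"

definition delayed_answer ::
  "('s, 'a) lts \<Rightarrow> 'a \<Rightarrow> ('s \<times> 's) set \<Rightarrow> 's \<Rightarrow> 'a \<Rightarrow> 's \<Rightarrow> 's \<Rightarrow> 's" where
  "delayed_answer step tau R x b x' y = (SOME y1. step y tau y1 \<and> (x, y1) \<in> R \<and>
     answer_depth step tau R x b x' y1 < answer_depth step tau R x b x' y)"

lemma delayed_answer_progress:
  assumes "immediate_answer step tau R b x' y = None" and "branching_answer step tau R x b x' y n"
  defines "y1 \<equiv> delayed_answer step tau R x b x' y"
  shows "step y tau y1 \<and> (x, y1) \<in> R \<and>
    answer_depth step tau R x b x' y1 < answer_depth step tau R x b x' y"
proof -
  let ?depth = "answer_depth step tau R x b x' y"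
  have "branching_answer step tau R x b x' y ?depth"
    unfolding answer_depth_def by (rule LeastI) (fact assms(2))
  moreover have "\<not> branching_answer step tau R x b x' y 0"
    using assms(1) unfolding immediate_answer_def
    by (auto split: if_splits elim: branching_answer.cases)
  ultimately obtain y2 m where "?depth = Suc m" "step y tau y2" "(x, y2) \<in> R"
    "branching_answer step tau R x b x' y2 m"
    by (cases ?depth) (auto elim: branching_answer.cases)
  moreover from this have "answer_depth step tau R x b x' y2 \<le> m"
    unfolding answer_depth_def by (blast intro: Least_le)
  ultimately have "\<exists>y1. step y tau y1 \<and> (x, y1) \<in> R \<and> answer_depth step tau R x b x' y1 < ?depth"
    by auto
  then show ?thesis unfolding y1_def delayed_answer_def by (rule someI_ex)
qed

section \<open>Winning strategies from a branching bisimulation\<close>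

fun bisimulation_bstrategy :: "('s, 'a) lts \<Rightarrow> 'a \<Rightarrow> ('s \<times> 's) set \<Rightarrow> ('s, 'a) bconf \<Rightarrow> ('s, 'a) bconf"
  where
  "bisimulation_bstrategy step tau R (BD (x, y) (Some (b, x')) r) =
     (case immediate_answer step tau R b x' y of
        Some y' \<Rightarrow> BS (x', y') None True
      | None \<Rightarrow> BS (x, delayed_answer step tau R x b x' y) (Some (b, x')) False)"
| "bisimulation_bstrategy step tau R c = c"

fun bisimulation_binv :: "('s, 'a) lts \<Rightarrow> ('s \<times> 's) set \<Rightarrow> ('s, 'a) bconf \<Rightarrow> bool" where
  "bisimulation_binv step R (BS (x, y) c r) \<longleftrightarrow> (x, y) \<in> R"
| "bisimulation_binv step R (BD (x, y) c r) \<longleftrightarrow> (x, y) \<in> R \<and> (\<exists>b x'. c = Some (b, x') \<and> step x b x')"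

fun bisimulation_brank :: "('s, 'a) lts \<Rightarrow> 'a \<Rightarrow> ('s \<times> 's) set \<Rightarrow> ('s, 'a) bconf \<Rightarrow> nat" where
  "bisimulation_brank step tau R (BD (x, y) (Some (b, x')) r) = answer_depth step tau R x b x' y"
| "bisimulation_brank step tau R c = 0"

lemma bmove_alternating: "alternating (bmove step tau) bdup"
  unfolding alternating_def by (auto elim: bmove.elims)

lemma branching_bisim_if_bisimulation:
  fixes step :: "('s, 'a) lts"
  assumes bisim: "branching_bisimulation step tau R" and "(s, t) \<in> R"
  shows "branching_bisim step tau s t"
  unfolding branching_bisim_def
proof (rule dup_wins_by_invariant_and_rank[where INV = "bisimulation_binv step R"
      and answer = "bisimulation_bstrategy step tau R" and rank = "bisimulation_brank step tau R"])
  show "bisimulation_binv step R (BS (s, t) None False)" using \<open>(s, t) \<in> R\<close> by simp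
next
  show "alternating (bmove step tau) bdup" by (rule bmove_alternating)
next
  fix c c' :: "('s, 'a) bconf"
  assume "bisimulation_binv step R c" "\<not> bdup c" "bmove step tau c c'"
  moreover note branching_bisimulationD(1)[OF bisim]
  ultimately show "bisimulation_binv step R c'" by (cases c rule: bdup.cases) auto
next
  fix c :: "('s, 'a) bconf"
  assume "bisimulation_binv step R c" "bdup c"
  then obtain x y b x' r where c: "c = BD (x, y) (Some (b, x')) r" and "(x, y) \<in> R" "step x b x'"
    by (cases c rule: bdup.cases) auto
  then obtain n where answer: "branching_answer step tau R x b x' y n"
    using branching_bisimulationD(2)[OF bisim] by blast
  show "bmove step tau c (bisimulation_bstrategy step tau R c) \<and>
      bisimulation_binv step R (bisimulation_bstrategy step tau R c)"
  proof (cases "immediate_answer step tau R b x' y")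
    case None
    with delayed_answer_progress[OF None answer] show ?thesis using c \<open>step x b x'\<close> by auto
  next
    case (Some y')
    with immediate_answer_Some[OF Some] show ?thesis using c by auto
  qed
next
  fix c c' :: "('s, 'a) bconf"
  assume "bisimulation_binv step R c" "bdup c"
    and unrewarded: "\<not> breward (bisimulation_bstrategy step tau R c)"
    and move: "bmove step tau (bisimulation_bstrategy step tau R c) c'" and "\<not> breward c'"
  then obtain x y b x' r where c: "c = BD (x, y) (Some (b, x')) r" and "(x, y) \<in> R" "step x b x'"
    by (cases c rule: bdup.cases) auto
  then obtain n where answer: "branching_answer step tau R x b x' y n"
    using branching_bisimulationD(2)[OF bisim] by blast
  have None: "immediate_answer step tau R b x' y = None"
    using unrewarded c by (auto split: option.splits)
  then have "c' = BD (x, delayed_answer step tau R x b x' y) (Some (b, x')) False"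
    using move c \<open>\<not> breward c'\<close> by auto
  then show "bisimulation_brank step tau R c' < bisimulation_brank step tau R c"
    using delayed_answer_progress[OF None answer] c by simp
qed

fun bisimulation_gstrategy :: "('s, 'a) lts \<Rightarrow> 'a \<Rightarrow> ('s \<times> 's) set \<Rightarrow> ('s, 'a) gconf \<Rightarrow> ('s, 'a) gconf"
  where
  "bisimulation_gstrategy step tau R (GD (x, y) (Some (b, x')) m r) =
     (case immediate_answer step tau R b x' y of
        Some y' \<Rightarrow> GS (x', y') None None True
      | None \<Rightarrow> GS (x, delayed_answer step tau R x b x' y) (Some (b, x'))
          (Some (delayed_answer step tau R x b x' y, Frown)) False)"
| "bisimulation_gstrategy step tau R c = c"

fun bisimulation_ginv :: "('s, 'a) lts \<Rightarrow> ('s \<times> 's) set \<Rightarrow> ('s, 'a) gconf \<Rightarrow> bool" where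
  "bisimulation_ginv step R (GS (x, y) c m r) \<longleftrightarrow>
     (x, y) \<in> R \<and> (\<forall>b x'. c = Some (b, x') \<longrightarrow> step x b x' \<and> m = Some (y, Frown))"
| "bisimulation_ginv step R (GD (x, y) c m r) \<longleftrightarrow>
     (x, y) \<in> R \<and> (\<exists>b x'. c = Some (b, x') \<and> step x b x' \<and> m = Some (y, Frown))"

fun bisimulation_grank :: "('s, 'a) lts \<Rightarrow> 'a \<Rightarrow> ('s \<times> 's) set \<Rightarrow> ('s, 'a) gconf \<Rightarrow> nat" where
  "bisimulation_grank step tau R (GD (x, y) (Some (b, x')) m r) = answer_depth step tau R x b x' y"
| "bisimulation_grank step tau R c = 0"

lemma gmove_alternating: "alternating (gmove step tau) gdup"
  unfolding alternating_def by (auto elim: gmove.elims)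

lemma empty_generic_bisim_if_bisimulation:
  fixes step :: "('s, 'a) lts"
  assumes bisim: "branching_bisimulation step tau R" and "(s, t) \<in> R"
  shows "empty_generic_bisim step tau s t"
  unfolding empty_generic_bisim_def
proof (rule dup_wins_by_invariant_and_rank[where INV = "bisimulation_ginv step R"
      and answer = "bisimulation_gstrategy step tau R" and rank = "bisimulation_grank step tau R"])
  show "bisimulation_ginv step R (GS (s, t) None None False)" using \<open>(s, t) \<in> R\<close> by simp
next
  show "alternating (gmove step tau) gdup" by (rule gmove_alternating)
next
  fix c c' :: "('s, 'a) gconf"
  assume "bisimulation_ginv step R c" "\<not> gdup c" "gmove step tau c c'"
  moreover note branching_bisimulationD(1)[OF bisim]
  ultimately show "bisimulation_ginv step R c'" by (cases c rule: gdup.cases) auto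
next
  fix c :: "('s, 'a) gconf"
  assume "bisimulation_ginv step R c" "gdup c"
  then obtain x y b x' r where c: "c = GD (x, y) (Some (b, x')) (Some (y, Frown)) r"
    and "(x, y) \<in> R" "step x b x'"
    by (cases c rule: gdup.cases) auto
  then obtain n where answer: "branching_answer step tau R x b x' y n"
    using branching_bisimulationD(2)[OF bisim] by blast
  show "gmove step tau c (bisimulation_gstrategy step tau R c) \<and>
      bisimulation_ginv step R (bisimulation_gstrategy step tau R c)"
  proof (cases "immediate_answer step tau R b x' y")
    case None
    with delayed_answer_progress[OF None answer] show ?thesis using c \<open>step x b x'\<close> by auto
  next
    case (Some y')
    with immediate_answer_Some[OF Some] show ?thesis using c by auto
  qed
next
  fix c c' :: "('s, 'a) gconf"
  assume "bisimulation_ginv step R c" "gdup c"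
    and unrewarded: "\<not> greward (bisimulation_gstrategy step tau R c)"
    and move: "gmove step tau (bisimulation_gstrategy step tau R c) c'" and "\<not> greward c'"
  then obtain x y b x' r where c: "c = GD (x, y) (Some (b, x')) (Some (y, Frown)) r"
    and "(x, y) \<in> R" "step x b x'"
    by (cases c rule: gdup.cases) auto
  then obtain n where answer: "branching_answer step tau R x b x' y n"
    using branching_bisimulationD(2)[OF bisim] by blast
  have None: "immediate_answer step tau R b x' y = None"
    using unrewarded c by (auto split: option.splits)
  define y1 where "y1 = delayed_answer step tau R x b x' y"
  have "c' = GD (x, y1) (Some (b, x')) (Some (y1, Frown)) False"
    using move c None \<open>\<not> greward c'\<close> unfolding y1_def by auto
  then show "bisimulation_grank step tau R c' < bisimulation_grank step tau R c"
    using delayed_answer_progress[OF None answer] c unfolding y1_def by simp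
qed

section \<open>Branching bisimulations from winning strategies\<close>

definition reached_bpairs ::
  "('s, 'a) lts \<Rightarrow> 'a \<Rightarrow> (('s, 'a) bconf list \<Rightarrow> ('s, 'a) bconf) \<Rightarrow> ('s, 'a) bconf \<Rightarrow> ('s \<times> 's) set"
  where
  "reached_bpairs step tau \<sigma> c0 =
     {(x, y). \<exists>h c r. consistent_history (bmove step tau) bdup \<sigma> c0 h \<and> last h = BS (x, y) c r}"

lemma reached_bpairsI:
  "consistent_history (bmove step tau) bdup \<sigma> c0 h \<Longrightarrow> last h = BS (x, y) c r \<Longrightarrow>
    (x, y) \<in> reached_bpairs step tau \<sigma> c0"
  unfolding reached_bpairs_def by blast

lemma winning_bstrategy_answers:
  assumes win: "winning_strategy (bmove step tau) bdup breward \<sigma> c0"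
    and h: "consistent_history (bmove step tau) bdup \<sigma> c0 h" "last h = BD (x, y) (Some (b, x')) r"
    and "step x b x'"
  shows "\<exists>n. branching_answer step tau (reached_bpairs step tau \<sigma> c0) x b x' y n"
proof (rule ccontr)
  let ?Q = "reached_bpairs step tau \<sigma> c0"
  let ?unanswered = "\<lambda>y. \<not> (\<exists>n. branching_answer step tau ?Q x b x' y n)"
  assume "?unanswered y"
  show False
  proof (rule winning_strategy_not_trapped[OF win h(1) _ bmove_alternating,
        where Trap = "\<lambda>c. \<exists>y r. c = BD (x, y) (Some (b, x')) r \<and> ?unanswered y"])
    show "\<exists>y r. last h = BD (x, y) (Some (b, x')) r \<and> ?unanswered y"
      using h \<open>?unanswered y\<close> by blast
  next
    fix h assume h: "consistent_history (bmove step tau) bdup \<sigma> c0 h"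
      and "\<exists>y r. last h = BD (x, y) (Some (b, x')) r \<and> ?unanswered y"
    then obtain y r where last: "last h = BD (x, y) (Some (b, x')) r" and "?unanswered y" by blast
    then have "bmove step tau (last h) (\<sigma> h)"
      and h': "consistent_history (bmove step tau) bdup \<sigma> c0 (h @ [\<sigma> h])"
      using winning_strategy_move[OF win h] by auto
    then consider "b = tau" "\<sigma> h = BS (x', y) None True"
      | v' where "step y b v'" "\<sigma> h = BS (x', v') None True"
      | v' where "step y tau v'" "\<sigma> h = BS (x, v') (Some (b, x')) False"
      using last by auto
    then show "\<exists>c'. \<not> breward (\<sigma> h) \<and> bmove step tau (\<sigma> h) c' \<and> \<not> breward c' \<and>
        (\<exists>y r. c' = BD (x, y) (Some (b, x')) r \<and> ?unanswered y)"
    proof cases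
      case 1
      have "(x', y) \<in> ?Q" by (rule reached_bpairsI[OF h']) (auto simp: 1)
      then show ?thesis using 1 \<open>?unanswered y\<close> answer_silent by metis
    next
      case (2 v')
      have "(x', v') \<in> ?Q" by (rule reached_bpairsI[OF h']) (auto simp: 2)
      then show ?thesis using 2 \<open>?unanswered y\<close> answer_step by metis
    next
      case (3 v')
      have "(x, v') \<in> ?Q" by (rule reached_bpairsI[OF h']) (auto simp: 3)
      then have "?unanswered v'" using 3 \<open>?unanswered y\<close> answer_delay by metis
      then show ?thesis
        using 3 \<open>step x b x'\<close> by (intro exI[of _ "BD (x, v') (Some (b, x')) False"]) auto
    qed
  next
    fix c assume "\<exists>y r. c = BD (x, y) (Some (b, x')) r \<and> ?unanswered y"
    then show "bdup c" by auto
  qed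
qed

lemma bisimulation_if_branching_bisim:
  assumes "branching_bisim step tau s t"
  shows "\<exists>R. branching_bisimulation step tau R \<and> (s, t) \<in> R"
proof -
  let ?c0 = "BS (s, t) None False"
  obtain \<sigma> where win: "winning_strategy (bmove step tau) bdup breward \<sigma> ?c0"
    using assms unfolding branching_bisim_def dup_wins_iff_winning_strategy by blast
  let ?Q = "reached_bpairs step tau \<sigma> ?c0"
  have "(s, t) \<in> ?Q" by (rule reached_bpairsI[OF consistent_history_init]) auto
  moreover have "branching_bisimulation step tau (?Q \<union> ?Q\<inverse>)"
  proof (rule branching_bisimulation_symcl)
    fix x y b x' assume "(x, y) \<in> ?Q \<or> (y, x) \<in> ?Q" and "step x b x'"
    then obtain h c r where h: "consistent_history (bmove step tau) bdup \<sigma> ?c0 h"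
      and last: "last h = BS (x, y) c r \<or> last h = BS (y, x) c r"
      unfolding reached_bpairs_def by blast
    define g where "g = BD (x, y) (Some (b, x'))
      (if last h = BS (x, y) c r then \<not> (c = Some (b, x') \<or> c = None) else True)"
    have "bmove step tau (last h) g" and "\<not> bdup (last h)"
      using last \<open>step x b x'\<close> unfolding g_def by auto
    then have "consistent_history (bmove step tau) bdup \<sigma> ?c0 (h @ [g])"
      using consistent_history_snoc[OF h] by blast
    then show "\<exists>n. branching_answer step tau ?Q x b x' y n"
      by (rule winning_bstrategy_answers[OF win _ _ \<open>step x b x'\<close>]) (auto simp: g_def)
  qed
  ultimately show ?thesis by blast
qed

definition reached_gpairs ::
  "('s, 'a) lts \<Rightarrow> 'a \<Rightarrow> (('s, 'a) gconf list \<Rightarrow> ('s, 'a) gconf) \<Rightarrow> ('s, 'a) gconf \<Rightarrow> ('s \<times> 's) set"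
  where
  "reached_gpairs step tau \<sigma> c0 =
     {(x, y). \<exists>h c m r. consistent_history (gmove step tau) gdup \<sigma> c0 h \<and> last h = GS (x, y) c m r}"

lemma reached_gpairsI:
  "consistent_history (gmove step tau) gdup \<sigma> c0 h \<Longrightarrow> last h = GS (x, y) c m r \<Longrightarrow>
    (x, y) \<in> reached_gpairs step tau \<sigma> c0"
  unfolding reached_gpairs_def by blast

text \<open>A smile marker is only set by move D2a, which makes the target of the challenge the new
left state.\<close>

fun gmarker_ok :: "('s, 'a) gconf \<Rightarrow> bool" where
  "gmarker_ok (GS (x, y) c m r) \<longleftrightarrow>
     (\<forall>b x'. c = Some (b, x') \<longrightarrow> m = Some (y, Frown) \<or> m = Some (y, Smile) \<and> x' = x)"
| "gmarker_ok (GD (x, y) c m r) \<longleftrightarrow>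
     (\<forall>b x'. c = Some (b, x') \<longrightarrow> m = Some (y, Frown) \<or> m = Some (y, Smile) \<and> x' = x)"

lemma gmarker_ok_gmove: "gmove step tau c c' \<Longrightarrow> gmarker_ok c \<Longrightarrow> gmarker_ok c'"
  by (erule gmove.elims) auto

lemma winning_gstrategy_answers_frown:
  assumes win: "winning_strategy (gmove step tau) gdup greward \<sigma> c0"
    and h: "consistent_history (gmove step tau) gdup \<sigma> c0 h"
      "last h = GD (x, y) (Some (b, x')) (Some (y, Frown)) r"
  shows "\<exists>n. branching_answer step tau (reached_gpairs step tau \<sigma> c0) x b x' y n"
proof (rule ccontr)
  let ?Q = "reached_gpairs step tau \<sigma> c0"
  let ?unanswered = "\<lambda>y. \<not> (\<exists>n. branching_answer step tau ?Q x b x' y n)"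
  assume "?unanswered y"
  show False
  proof (rule winning_strategy_not_trapped[OF win h(1) _ gmove_alternating,
        where Trap = "\<lambda>c. \<exists>y r. c = GD (x, y) (Some (b, x')) (Some (y, Frown)) r \<and> ?unanswered y"])
    show "\<exists>y r'. last h = GD (x, y) (Some (b, x')) (Some (y, Frown)) r' \<and> ?unanswered y"
      using h \<open>?unanswered y\<close> by blast
  next
    fix h assume h: "consistent_history (gmove step tau) gdup \<sigma> c0 h"
      and "\<exists>y r. last h = GD (x, y) (Some (b, x')) (Some (y, Frown)) r \<and> ?unanswered y"
    then obtain y r where last: "last h = GD (x, y) (Some (b, x')) (Some (y, Frown)) r"
      and "?unanswered y"
      by blast
    then have "gmove step tau (last h) (\<sigma> h)"
      and h': "consistent_history (gmove step tau) gdup \<sigma> c0 (h @ [\<sigma> h])"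
      using winning_strategy_move[OF win h] by auto
    then consider "b = tau" "\<sigma> h = GS (x', y) None None True"
      | v' where "step y b v'" "\<sigma> h = GS (x', v') (Some (b, x')) (Some (v', Smile)) False"
      | v' where "step y b v'" "\<sigma> h = GS (x', v') None None True"
      | v' where "step y tau v'" "\<sigma> h = GS (x, v') (Some (b, x')) (Some (v', Frown)) False"
      using last by auto
    then show "\<exists>c'. \<not> greward (\<sigma> h) \<and> gmove step tau (\<sigma> h) c' \<and> \<not> greward c' \<and>
        (\<exists>y r. c' = GD (x, y) (Some (b, x')) (Some (y, Frown)) r \<and> ?unanswered y)"
    proof cases
      case 1
      have "(x', y) \<in> ?Q" by (rule reached_gpairsI[OF h']) (auto simp: 1)
      then show ?thesis using 1 \<open>?unanswered y\<close> answer_silent by metis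
    next
      case (2 v')
      have "(x', v') \<in> ?Q" by (rule reached_gpairsI[OF h']) (auto simp: 2)
      then show ?thesis using 2 \<open>?unanswered y\<close> answer_step by metis
    next
      case (3 v')
      have "(x', v') \<in> ?Q" by (rule reached_gpairsI[OF h']) (auto simp: 3)
      then show ?thesis using 3 \<open>?unanswered y\<close> answer_step by metis
    next
      case (4 v')
      have "(x, v') \<in> ?Q" by (rule reached_gpairsI[OF h']) (auto simp: 4)
      then have "?unanswered v'" using 4 \<open>?unanswered y\<close> answer_delay by metis
      then show ?thesis
        using 4 by (intro exI[of _ "GD (x, v') (Some (b, x')) (Some (v', Frown)) False"]) auto
    qed
  next
    fix c assume "\<exists>y r. c = GD (x, y) (Some (b, x')) (Some (y, Frown)) r \<and> ?unanswered y"
    then show "gdup c" by auto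
  qed
qed

lemma winning_gstrategy_answers_smile:
  assumes win: "winning_strategy (gmove step tau) gdup greward \<sigma> c0"
    and h: "consistent_history (gmove step tau) gdup \<sigma> c0 h"
      "last h = GD (x, y) (Some (b, x)) (Some (y, Smile)) r"
    and "step x b x"
  shows "\<exists>n. branching_answer step tau (reached_gpairs step tau \<sigma> c0) x b x y n"
proof (rule ccontr)
  let ?Q = "reached_gpairs step tau \<sigma> c0"
  let ?unanswered = "\<lambda>y. \<not> (\<exists>n. branching_answer step tau ?Q x b x y n)"
  assume "?unanswered y"
  show False
  proof (rule winning_strategy_not_trapped[OF win h(1) _ gmove_alternating,
        where Trap = "\<lambda>c. \<exists>y r. c = GD (x, y) (Some (b, x)) (Some (y, Smile)) r \<and> ?unanswered y"])
    show "\<exists>y r'. last h = GD (x, y) (Some (b, x)) (Some (y, Smile)) r' \<and> ?unanswered y"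
      using h \<open>?unanswered y\<close> by blast
  next
    fix h assume h: "consistent_history (gmove step tau) gdup \<sigma> c0 h"
      and "\<exists>y r. last h = GD (x, y) (Some (b, x)) (Some (y, Smile)) r \<and> ?unanswered y"
    then obtain y r where last: "last h = GD (x, y) (Some (b, x)) (Some (y, Smile)) r"
      and "?unanswered y"
      by blast
    then have "gmove step tau (last h) (\<sigma> h)"
      and h': "consistent_history (gmove step tau) gdup \<sigma> c0 (h @ [\<sigma> h])"
      using winning_strategy_move[OF win h] by auto
    then consider "b = tau" "\<sigma> h = GS (x, y) None None True"
      | v' where "step y tau v'" "\<sigma> h = GS (x, v') (Some (b, x)) (Some (v', Smile)) False"
      | v' where "step y tau v'" "\<sigma> h = GS (x, v') None None True"
      using last by auto
    then show "\<exists>c'. \<not> greward (\<sigma> h) \<and> gmove step tau (\<sigma> h) c' \<and> \<not> greward c' \<and>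
        (\<exists>y r. c' = GD (x, y) (Some (b, x)) (Some (y, Smile)) r \<and> ?unanswered y)"
    proof cases
      case 1
      have "(x, y) \<in> ?Q" by (rule reached_gpairsI[OF h']) (auto simp: 1)
      then show ?thesis using 1 \<open>?unanswered y\<close> answer_silent by metis
    next
      case (2 v')
      have "(x, v') \<in> ?Q" by (rule reached_gpairsI[OF h']) (auto simp: 2)
      then have "?unanswered v'" using 2 \<open>?unanswered y\<close> answer_delay by metis
      then show ?thesis
        using 2 by (intro exI[of _ "GD (x, v') (Some (b, x)) (Some (v', Smile)) False"]) auto
    next
      case (3 v')
      have "(x, v') \<in> ?Q" by (rule reached_gpairsI[OF h']) (auto simp: 3)
      define g where "g = GD (x, v') (Some (b, x)) (Some (v', Frown)) False"
      have "gmove step tau (\<sigma> h) g" using 3 \<open>step x b x\<close> unfolding g_def by auto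
      then have "consistent_history (gmove step tau) gdup \<sigma> c0 ((h @ [\<sigma> h]) @ [g])"
        using consistent_history_snoc[OF h'] 3 by simp
      then have "\<exists>n. branching_answer step tau ?Q x b x v' n"
        by (rule winning_gstrategy_answers_frown[OF win]) (auto simp: g_def)
      then show ?thesis using 3 \<open>(x, v') \<in> ?Q\<close> \<open>?unanswered y\<close> answer_delay by metis
    qed
  next
    fix c assume "\<exists>y r. c = GD (x, y) (Some (b, x)) (Some (y, Smile)) r \<and> ?unanswered y"
    then show "gdup c" by auto
  qed
qed

lemma bisimulation_if_empty_generic_bisim:
  assumes "empty_generic_bisim step tau s t"
  shows "\<exists>R. branching_bisimulation step tau R \<and> (s, t) \<in> R"
proof -
  let ?c0 = "GS (s, t) None None False"
  obtain \<sigma> where win: "winning_strategy (gmove step tau) gdup greward \<sigma> ?c0"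
    using assms unfolding empty_generic_bisim_def dup_wins_iff_winning_strategy by blast
  let ?Q = "reached_gpairs step tau \<sigma> ?c0"
  have "(s, t) \<in> ?Q" by (rule reached_gpairsI[OF consistent_history_init]) auto
  moreover have "branching_bisimulation step tau (?Q \<union> ?Q\<inverse>)"
  proof (rule branching_bisimulation_symcl)
    fix x y b x' assume "(x, y) \<in> ?Q \<or> (y, x) \<in> ?Q" and "step x b x'"
    then obtain h c m r where h: "consistent_history (gmove step tau) gdup \<sigma> ?c0 h"
      and last: "last h = GS (x, y) c m r \<or> last h = GS (y, x) c m r"
      unfolding reached_gpairs_def by blast
    have marker: "gmarker_ok (last h)"
      by (rule consistent_history_last_invariant[OF h]) (auto intro: gmarker_ok_gmove)
    obtain g where move: "gmove step tau (last h) g"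
      and g: "(\<exists>r'. g = GD (x, y) (Some (b, x')) (Some (y, Frown)) r') \<or>
        x' = x \<and> (\<exists>r'. g = GD (x, y) (Some (b, x)) (Some (y, Smile)) r')"
    proof (cases "last h = GS (x, y) c m r \<and> c = Some (b, x')")
      case True
      then have "m = Some (y, Frown) \<or> m = Some (y, Smile) \<and> x' = x" using marker by simp
      then show ?thesis using True that by auto
    next
      case False
      then have "gmove step tau (last h) (GD (x, y) (Some (b, x')) (Some (y, Frown)) True)"
        using last \<open>step x b x'\<close> by auto
      then show ?thesis by (rule that) blast
    qed
    have "\<not> gdup (last h)" using last by auto
    then have "consistent_history (gmove step tau) gdup \<sigma> ?c0 (h @ [g])"
      using consistent_history_snoc[OF h move] by blast
    then show "\<exists>n. branching_answer step tau ?Q x b x' y n"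
      using g winning_gstrategy_answers_frown[OF win] winning_gstrategy_answers_smile[OF win]
        \<open>step x b x'\<close>
      by auto
  qed
  ultimately show ?thesis by blast
qed

lemma branching_bisim_iff_bisimulation:
  "branching_bisim step tau s t \<longleftrightarrow> (\<exists>R. branching_bisimulation step tau R \<and> (s, t) \<in> R)"
  using bisimulation_if_branching_bisim branching_bisim_if_bisimulation by metis

lemma empty_generic_bisim_iff_bisimulation:
  "empty_generic_bisim step tau s t \<longleftrightarrow> (\<exists>R. branching_bisimulation step tau R \<and> (s, t) \<in> R)"
  using bisimulation_if_empty_generic_bisim empty_generic_bisim_if_bisimulation by metis

theorem theorem5p14:
  fixes step :: "'s \<Rightarrow> 'a \<Rightarrow> 's \<Rightarrow> bool" and tau :: 'a and s t :: 's
  shows "branching_bisim step tau s t \<longleftrightarrow> empty_generic_bisim step tau s t"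
  unfolding branching_bisim_iff_bisimulation empty_generic_bisim_iff_bisimulation ..

end
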